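(* Let $\mathscr{S}=(T,S,\sigma,\mu,\tau_T,\tau_S)$ be a relaxed scenario. If $G_{=}(\mathscr{S})$ contains an induced path $a-b-c-d$ on four vertices, then either ($ad\in E(G_{<}(\mathscr{S}))$ and $ac,bd\in E(G_{>}(\mathscr{S}))$) or ($ad\in E(G_{>}(\mathscr{S}))$ and $ac,bd\in E(G_{<}(\mathscr{S}))$). In either case, both $\{a,b,d\}$ and $\{a,c,d\}$ are rainbow triangles.
   Context: All trees are planted phylogenetic trees: a tree $T$ has a distinguished vertex $0_T$ of degree $1$ whose unique neighbor $\rho_T$ is the root, and every vertex other than $0_T$ and the leaves $L(T)$ has at least two children. For $x,y\in V(T)$ write $y\preceq_T x$ if $x$ lies on the path from $0_T$ to $y$; edges are written $uv$ with $v\prec_T u$. $\mathrm{lca}_T$ denotes the last common ancestor. A time map for $T$ is $\tau_T\colon V(T)\to\mathbb{R}$ with $\tau_T(x)<\tau_T(y)$ whenever $x\prec_T y$. A relaxed scenario $\mathscr{S}=(T,S,\sigma,\mu,\tau_T,\tau_S)$ consists of a gene tree $T$ with time map $\tau_T$, a species tree $S$ with time map $\tau_S$, a map $\sigma\colon L(T)\to M$ with $M\subseteq L(S)$, and a map $\mu\colon V(T)\to V(S)\cup E(S)$ such that (S0) $\mu(x)=0_S$ iff $x=0_T$; (S1) $\mu(x)\in L(S)$ iff $x\in L(T)$, in which case $\mu(x)=\sigma(x)$; (S2) if $\mu(x)\in V(S)$ then $\tau_S(\mu(x))=\tau_T(x)$; (S3) if $\mu(x)=uv\in E(S)$ then $\tau_S(v)<\tau_T(x)<\tau_S(u)$.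 The graphs $G_{=}(\mathscr{S})$, $G_{<}(\mathscr{S})$, $G_{>}(\mathscr{S})$ have vertex set $L(T)$, and for distinct $x,y$ the pair $xy$ is an edge of $G_{=}(\mathscr{S})$, $G_{<}(\mathscr{S})$, resp. $G_{>}(\mathscr{S})$ iff $\tau_T(\mathrm{lca}_T(x,y))$ is $=$, $<$, resp. $>$ than $\tau_S(\mathrm{lca}_S(\sigma(x),\sigma(y)))$. A rainbow triangle is a set of three vertices whose three pairs lie in three different graphs among $G_{<}(\mathscr{S})$, $G_{=}(\mathscr{S})$, $G_{>}(\mathscr{S})$. *)

theory Defs
  imports Complex_Main
begin

text \<open>A tree is given by a finite vertex set V, a set E of directed edges (u,v)
  with v a child of u, and the planted vertex r0 (= 0_T).\<close>

definition preceq :: "('v \<times> 'v) set \<Rightarrow> 'v \<Rightarrow> 'v \<Rightarrow> bool" where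
  "preceq E y x \<longleftrightarrow> (x, y) \<in> E\<^sup>*"   \<comment> \<open>y \<preceq> x: x lies on the path from 0 to y\<close>

definition prec :: "('v \<times> 'v) set \<Rightarrow> 'v \<Rightarrow> 'v \<Rightarrow> bool" where
  "prec E y x \<longleftrightarrow> preceq E y x \<and> y \<noteq> x"

definition children :: "('v \<times> 'v) set \<Rightarrow> 'v \<Rightarrow> 'v set" where
  "children E u = {v. (u, v) \<in> E}"

definition leaves :: "'v set \<Rightarrow> ('v \<times> 'v) set \<Rightarrow> 'v set" where
  "leaves V E = {v \<in> V. children E v = {}}"

definition planted_phylo_tree :: "'v set \<Rightarrow> ('v \<times> 'v) set \<Rightarrow> 'v \<Rightarrow> bool" where
  "planted_phylo_tree V E r0 \<longleftrightarrow>
     finite V \<and> E \<subseteq> V \<times> V \<and> r0 \<in> V \<and>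
     (\<forall>v \<in> V. (r0, v) \<in> E\<^sup>*) \<and>
     (\<forall>u. (u, r0) \<notin> E) \<and>
     (\<forall>v \<in> V - {r0}. \<exists>!u. (u, v) \<in> E) \<and>
     card (children E r0) = 1 \<and>
     (\<forall>v \<in> V - {r0} - leaves V E. card (children E v) \<ge> 2)"

definition lca :: "'v set \<Rightarrow> ('v \<times> 'v) set \<Rightarrow> 'v \<Rightarrow> 'v \<Rightarrow> 'v" where
  "lca V E x y = (THE z. z \<in> V \<and> preceq E x z \<and> preceq E y z \<and>
       (\<forall>w \<in> V. preceq E x w \<and> preceq E y w \<longrightarrow> preceq E z w))"

definition time_map :: "'v set \<Rightarrow> ('v \<times> 'v) set \<Rightarrow> ('v \<Rightarrow> real) \<Rightarrow> bool" where
  "time_map V E \<tau> \<longleftrightarrow> (\<forall>x \<in> V. \<forall>y \<in> V. prec E x y \<longrightarrow> \<tau> x < \<tau> y)"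

text \<open>mu maps gene-tree vertices to species-tree vertices (Inl v) or edges (Inr (u,v)).\<close>

record ('g, 's) scenario =
  VT :: "'g set"
  ET :: "('g \<times> 'g) set"
  rT :: 'g
  VS :: "'s set"
  ES :: "('s \<times> 's) set"
  rS :: 's
  sigma :: "'g \<Rightarrow> 's"
  mu :: "'g \<Rightarrow> 's + ('s \<times> 's)"
  tauT :: "'g \<Rightarrow> real"
  tauS :: "'s \<Rightarrow> real"

abbreviation LT :: "('g, 's, 'z) scenario_scheme \<Rightarrow> 'g set" where
  "LT Sc \<equiv> leaves (VT Sc) (ET Sc)"

abbreviation LS :: "('g, 's, 'z) scenario_scheme \<Rightarrow> 's set" where
  "LS Sc \<equiv> leaves (VS Sc) (ES Sc)"

definition relaxed_scenario :: "('g, 's, 'z) scenario_scheme \<Rightarrow> bool" where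
  "relaxed_scenario Sc \<longleftrightarrow>
     planted_phylo_tree (VT Sc) (ET Sc) (rT Sc) \<and>
     planted_phylo_tree (VS Sc) (ES Sc) (rS Sc) \<and>
     time_map (VT Sc) (ET Sc) (tauT Sc) \<and>
     time_map (VS Sc) (ES Sc) (tauS Sc) \<and>
     (\<forall>x \<in> LT Sc. sigma Sc x \<in> LS Sc) \<and>
     (\<forall>x \<in> VT Sc. case mu Sc x of Inl v \<Rightarrow> v \<in> VS Sc | Inr e \<Rightarrow> e \<in> ES Sc) \<and>
     \<comment> \<open>(S0)\<close>
     (\<forall>x \<in> VT Sc. mu Sc x = Inl (rS Sc) \<longleftrightarrow> x = rT Sc) \<and>
     \<comment> \<open>(S1)\<close>
     (\<forall>x \<in> VT Sc. (\<exists>v \<in> LS Sc. mu Sc x = Inl v) \<longleftrightarrow> x \<in> LT Sc) \<and>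
     (\<forall>x \<in> LT Sc. mu Sc x = Inl (sigma Sc x)) \<and>
     \<comment> \<open>(S2)\<close>
     (\<forall>x \<in> VT Sc. \<forall>v. mu Sc x = Inl v \<longrightarrow> tauS Sc v = tauT Sc x) \<and>
     \<comment> \<open>(S3)\<close>
     (\<forall>x \<in> VT Sc. \<forall>u v. mu Sc x = Inr (u, v) \<longrightarrow>
         tauS Sc v < tauT Sc x \<and> tauT Sc x < tauS Sc u)"

definition tT_lca :: "('g, 's, 'z) scenario_scheme \<Rightarrow> 'g \<Rightarrow> 'g \<Rightarrow> real" where
  "tT_lca Sc x y = tauT Sc (lca (VT Sc) (ET Sc) x y)"

definition tS_lca :: "('g, 's, 'z) scenario_scheme \<Rightarrow> 'g \<Rightarrow> 'g \<Rightarrow> real" where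
  "tS_lca Sc x y = tauS Sc (lca (VS Sc) (ES Sc) (sigma Sc x) (sigma Sc y))"

definition G_eq :: "('g, 's, 'z) scenario_scheme \<Rightarrow> 'g \<Rightarrow> 'g \<Rightarrow> bool" where
  "G_eq Sc x y \<longleftrightarrow> x \<in> LT Sc \<and> y \<in> LT Sc \<and> x \<noteq> y \<and> tT_lca Sc x y = tS_lca Sc x y"

definition G_lt :: "('g, 's, 'z) scenario_scheme \<Rightarrow> 'g \<Rightarrow> 'g \<Rightarrow> bool" where
  "G_lt Sc x y \<longleftrightarrow> x \<in> LT Sc \<and> y \<in> LT Sc \<and> x \<noteq> y \<and> tT_lca Sc x y < tS_lca Sc x y"

definition G_gt :: "('g, 's, 'z) scenario_scheme \<Rightarrow> 'g \<Rightarrow> 'g \<Rightarrow> bool" where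
  "G_gt Sc x y \<longleftrightarrow> x \<in> LT Sc \<and> y \<in> LT Sc \<and> x \<noteq> y \<and> tT_lca Sc x y > tS_lca Sc x y"

definition rainbow_triangle :: "('g, 's, 'z) scenario_scheme \<Rightarrow> 'g \<Rightarrow> 'g \<Rightarrow> 'g \<Rightarrow> bool" where
  "rainbow_triangle Sc x y z \<longleftrightarrow>
     (G_lt Sc x y \<and> G_eq Sc y z \<and> G_gt Sc x z) \<or>
     (G_lt Sc x y \<and> G_gt Sc y z \<and> G_eq Sc x z) \<or>
     (G_eq Sc x y \<and> G_lt Sc y z \<and> G_gt Sc x z) \<or>
     (G_eq Sc x y \<and> G_gt Sc y z \<and> G_lt Sc x z) \<or>
     (G_gt Sc x y \<and> G_lt Sc y z \<and> G_eq Sc x z) \<or>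
     (G_gt Sc x y \<and> G_eq Sc y z \<and> G_lt Sc x z)"

definition induced_P4 :: "('g \<Rightarrow> 'g \<Rightarrow> bool) \<Rightarrow> 'g set \<Rightarrow> 'g \<Rightarrow> 'g \<Rightarrow> 'g \<Rightarrow> 'g \<Rightarrow> bool" where
  "induced_P4 G V a b c d \<longleftrightarrow>
     {a, b, c, d} \<subseteq> V \<and> distinct [a, b, c, d] \<and>
     G a b \<and> G b c \<and> G c d \<and> \<not> G a c \<and> \<not> G b d \<and> \<not> G a d"

end

theory Submission
  imports Defs
begin

text \<open>In a tree with a time map, \<open>(x, y) \<mapsto> \<tau> (lca x y)\<close> satisfies the ultrametric
  inequality, so \<open>t = tT_lca\<close> and \<open>s = tS_lca\<close> are ultrametrics on the gene leaves and all
  their triangles are isosceles with the two largest sides equal. As \<open>t\<close> and \<open>s\<close> agree on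
  \<open>ab, bc\<close> but not on \<open>ac\<close>, the triangle \<open>abc\<close> forces \<open>t ab = t bc\<close>; likewise
  \<open>t bc = t cd\<close>. Calling this value \<open>\<alpha>\<close>, all other sides are at most \<open>\<alpha>\<close>, and if, say,
  \<open>t ac < s ac \<le> \<alpha>\<close>, the triangles \<open>acd\<close> and \<open>abd\<close> give \<open>s ad < t ad = \<alpha>\<close> and then
  \<open>t bd < s bd = \<alpha>\<close>.\<close>

text \<open>The diagonal is unconstrained: for \<open>tT_lca\<close>, the value at \<open>(x, x)\<close> is the time of \<open>x\<close>, not 0.\<close>

definition ultrametric_on :: "'a set \<Rightarrow> ('a \<Rightarrow> 'a \<Rightarrow> 'b::linorder) \<Rightarrow> bool" where
  "ultrametric_on A t \<longleftrightarrow>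
     (\<forall>x\<in>A. \<forall>y\<in>A. t x y = t y x) \<and>
     (\<forall>x\<in>A. \<forall>y\<in>A. \<forall>z\<in>A. t x y \<le> max (t x z) (t y z))"

lemma ultrametric_on_commute: "ultrametric_on A t \<Longrightarrow> x \<in> A \<Longrightarrow> y \<in> A \<Longrightarrow> t x y = t y x"
  unfolding ultrametric_on_def by blast

lemma ultrametric_on_le_max:
  "ultrametric_on A t \<Longrightarrow> x \<in> A \<Longrightarrow> y \<in> A \<Longrightarrow> z \<in> A \<Longrightarrow> t x y \<le> max (t x z) (t y z)"
  unfolding ultrametric_on_def by blast

lemma ultrametric_on_compose:
  assumes "ultrametric_on A t" "f ` B \<subseteq> A"
  shows "ultrametric_on B (\<lambda>x y. t (f x) (f y))"
  using assms unfolding ultrametric_on_def by (simp add: image_subset_iff)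

lemma ultrametric_on_isosceles:
  assumes t: "ultrametric_on A t" and A: "x \<in> A" "y \<in> A" "z \<in> A" and ne: "t x y \<noteq> t y z"
  shows "t x z = max (t x y) (t y z)"
proof (rule order.antisym)
  show "t x z \<le> max (t x y) (t y z)"
    using ultrametric_on_le_max[OF t, of x z y] ultrametric_on_commute[OF t, of z y] A by simp
  show "max (t x y) (t y z) \<le> t x z"
  proof (cases "t x y < t y z")
    case True
    then show ?thesis
      using ultrametric_on_le_max[OF t, of y z x] ultrametric_on_commute[OF t, of y x]
        ultrametric_on_commute[OF t, of z x] A
      by (auto simp: max_def split: if_splits)
  next
    case False
    with ne have "t y z < t x y" by simp
    then show ?thesis
      using ultrametric_on_le_max[OF t, of x y z] A by (auto simp: max_def split: if_splits)
  qed
qed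

lemma ultrametrics_disagreement_isosceles:
  assumes t: "ultrametric_on A t" and s: "ultrametric_on A s" and A: "x \<in> A" "y \<in> A" "z \<in> A"
    and agree: "t x y = s x y" "t y z = s y z" and disagree: "t x z \<noteq> s x z"
  shows "t x y = t y z"
proof (rule ccontr)
  assume ne: "t x y \<noteq> t y z"
  have "t x z = max (t x y) (t y z)"
    using ultrametric_on_isosceles[OF t A ne] .
  moreover have "s x z = max (s x y) (s y z)"
    using ultrametric_on_isosceles[OF s A] ne agree by simp
  ultimately show False
    using agree disagree by simp
qed

lemma ultrametrics_P4_oriented:
  assumes t: "ultrametric_on A t" and s: "ultrametric_on A s"
    and A: "a \<in> A" "b \<in> A" "c \<in> A" "d \<in> A"
    and agree: "t a b = s a b" "t b c = s b c" "t c d = s c d"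
    and disagree: "t b d \<noteq> s b d" "t a d \<noteq> s a d"
    and ac: "t a c < s a c"
  shows "s a d < t a d \<and> t b d < s b d"
proof -
  define \<alpha> where "\<alpha> = t b c"
  have ab: "t a b = \<alpha>"
    using ultrametrics_disagreement_isosceles[OF t s A(1-3)] agree ac unfolding \<alpha>_def by simp
  have cd: "t c d = \<alpha>"
    using ultrametrics_disagreement_isosceles[OF t s A(2-4)] agree disagree(1) unfolding \<alpha>_def
    by simp
  have "s a c \<le> \<alpha>"
    using ultrametric_on_le_max[OF s A(1,3,2)] ultrametric_on_commute[OF s A(3,2)] agree ab
    unfolding \<alpha>_def by simp
  with ac have t_ac: "t a c < \<alpha>" by simp
  have t_ad: "t a d = \<alpha>"
    using ultrametric_on_isosceles[OF t A(1,3,4)] t_ac cd by simp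
  have "s a d \<le> max (s a c) (s d c)"
    using ultrametric_on_le_max[OF s A(1,4,3)] .
  then have "s a d \<le> \<alpha>"
    using \<open>s a c \<le> \<alpha>\<close> ultrametric_on_commute[OF s A(4,3)] agree cd by simp
  with disagree(2) t_ad have s_ad: "s a d < \<alpha>" by simp
  have "s b d = max (s b a) (s a d)"
    using ultrametric_on_isosceles[OF s A(2,1,4)] ultrametric_on_commute[OF s A(2,1)] agree ab s_ad
    by simp
  then have s_bd: "s b d = \<alpha>"
    using ultrametric_on_commute[OF s A(2,1)] agree ab s_ad by simp
  have "t b d \<le> \<alpha>"
    using ultrametric_on_le_max[OF t A(2,4,3)] ultrametric_on_commute[OF t A(4,3)] cd
    unfolding \<alpha>_def by simp
  with disagree(1) s_bd have "t b d < s b d" by simp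
  with s_ad t_ad show ?thesis by simp
qed

lemma ultrametrics_P4_signs:
  assumes t: "ultrametric_on A t" and s: "ultrametric_on A s"
    and A: "a \<in> A" "b \<in> A" "c \<in> A" "d \<in> A"
    and agree: "t a b = s a b" "t b c = s b c" "t c d = s c d"
    and disagree: "t a c \<noteq> s a c" "t b d \<noteq> s b d" "t a d \<noteq> s a d"
  shows "(t a d < s a d \<and> t a c > s a c \<and> t b d > s b d) \<or>
         (t a d > s a d \<and> t a c < s a c \<and> t b d < s b d)"
proof (cases "t a c < s a c")
  case True
  then show ?thesis
    using ultrametrics_P4_oriented[OF t s A agree disagree(2,3)] by simp
next
  case False
  with disagree(1) have "s a c < t a c" by simp
  then show ?thesis
    using ultrametrics_P4_oriented[OF s t A agree[symmetric] disagree(2,3)[symmetric]] by simp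
qed

lemma planted_phylo_tree_ancestors_comparable:
  assumes T: "planted_phylo_tree V E r0" and "(u, x) \<in> E\<^sup>*" "(w, x) \<in> E\<^sup>*"
  shows "(u, w) \<in> E\<^sup>* \<or> (w, u) \<in> E\<^sup>*"
  using assms(2,3)
proof (induction arbitrary: w rule: rtrancl_induct)
  case base
  then show ?case by simp
next
  case (step y z)
  from step.prems show ?case
  proof (cases rule: rtranclE)
    case base
    then show ?thesis using step.hyps by (meson rtrancl.rtrancl_into_rtrancl)
  next
    case (step y')
    have "z \<in> V - {r0}"
      using T \<open>(y, z) \<in> E\<close> unfolding planted_phylo_tree_def by blast
    then have "y' = y"
      using T \<open>(y, z) \<in> E\<close> \<open>(y', z) \<in> E\<close> unfolding planted_phylo_tree_def by blast
    then show ?thesis using step.IH \<open>(w, y') \<in> E\<^sup>*\<close> by blast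
  qed
qed

lemma time_map_mono:
  assumes "time_map V E \<tau>" "a \<in> V" "b \<in> V" "preceq E a b"
  shows "\<tau> a \<le> \<tau> b"
  using assms unfolding time_map_def prec_def by (cases "a = b") force+

lemma time_map_antisym:
  assumes "time_map V E \<tau>" "a \<in> V" "b \<in> V" "preceq E a b" "preceq E b a"
  shows "a = b"
  using assms unfolding time_map_def prec_def by (metis less_asym)

lemma lca_least_common_ancestor:
  assumes T: "planted_phylo_tree V E r0" and tm: "time_map V E \<tau>" and "x \<in> V" "y \<in> V"
  shows "lca V E x y \<in> V" "preceq E x (lca V E x y)" "preceq E y (lca V E x y)"
    "\<And>w. w \<in> V \<Longrightarrow> preceq E x w \<Longrightarrow> preceq E y w \<Longrightarrow> preceq E (lca V E x y) w"
proof -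
  define C where "C = {w \<in> V. preceq E x w \<and> preceq E y w}"
  have "r0 \<in> C"
    using T assms(3,4) unfolding C_def planted_phylo_tree_def preceq_def by blast
  moreover have "finite C"
    using T unfolding C_def planted_phylo_tree_def by simp
  ultimately obtain z where "z \<in> C" and z_min: "\<And>w. w \<in> C \<Longrightarrow> \<tau> z \<le> \<tau> w"
    using arg_min_if_finite(1) arg_min_least by (metis empty_iff)
  have z_least: "preceq E z w" if "w \<in> C" for w
  proof -
    have "(z, w) \<in> E\<^sup>* \<or> (w, z) \<in> E\<^sup>*"
      using planted_phylo_tree_ancestors_comparable[OF T] \<open>z \<in> C\<close> that
      unfolding C_def preceq_def by blast
    moreover have "z = w" if "(z, w) \<in> E\<^sup>*"
      using that tm z_min[of w] \<open>z \<in> C\<close> \<open>w \<in> C\<close>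
      unfolding C_def time_map_def prec_def preceq_def by fastforce
    ultimately show ?thesis
      unfolding preceq_def by auto
  qed
  let ?lca = "\<lambda>z. z \<in> V \<and> preceq E x z \<and> preceq E y z \<and>
     (\<forall>w \<in> V. preceq E x w \<and> preceq E y w \<longrightarrow> preceq E z w)"
  have "?lca z"
    using \<open>z \<in> C\<close> z_least unfolding C_def by blast
  moreover have "z' = z" if "?lca z'" for z'
    using that \<open>?lca z\<close> time_map_antisym[OF tm] by blast
  ultimately have "?lca (lca V E x y)"
    unfolding lca_def by (rule theI)
  then show "lca V E x y \<in> V" "preceq E x (lca V E x y)" "preceq E y (lca V E x y)"
    "\<And>w. w \<in> V \<Longrightarrow> preceq E x w \<Longrightarrow> preceq E y w \<Longrightarrow> preceq E (lca V E x y) w"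
    by blast+
qed

lemma lca_commute: "lca V E x y = lca V E y x"
  unfolding lca_def by (simp add: conj_ac)

lemma preceq_trans: "preceq E a b \<Longrightarrow> preceq E b c \<Longrightarrow> preceq E a c"
  unfolding preceq_def by simp

lemma lca_time_ultrametric:
  assumes T: "planted_phylo_tree V E r0" and tm: "time_map V E \<tau>"
  shows "ultrametric_on V (\<lambda>x y. \<tau> (lca V E x y))"
  unfolding ultrametric_on_def
proof (intro conjI ballI)
  fix x y z assume V: "x \<in> V" "y \<in> V" "z \<in> V"
  note xz = lca_least_common_ancestor[OF T tm V(1,3)]
  note yz = lca_least_common_ancestor[OF T tm V(2,3)]
  note xy = lca_least_common_ancestor[OF T tm V(1,2)]
  have "preceq E (lca V E x z) (lca V E y z) \<or> preceq E (lca V E y z) (lca V E x z)"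
    using planted_phylo_tree_ancestors_comparable[OF T] xz(3) yz(3) unfolding preceq_def by blast
  then show "\<tau> (lca V E x y) \<le> max (\<tau> (lca V E x z)) (\<tau> (lca V E y z))"
  proof
    assume "preceq E (lca V E x z) (lca V E y z)"
    then have "preceq E (lca V E x y) (lca V E y z)"
      by (intro xy(4) yz(1,2) preceq_trans[OF xz(2)])
    then show ?thesis
      using time_map_mono[OF tm xy(1) yz(1)] by simp
  next
    assume "preceq E (lca V E y z) (lca V E x z)"
    then have "preceq E (lca V E x y) (lca V E x z)"
      by (intro xy(4) xz(1,2) preceq_trans[OF yz(2)])
    then show ?thesis
      using time_map_mono[OF tm xy(1) xz(1)] by simp
  qed
qed (simp add: lca_commute)

lemma relaxed_scenario_ultrametric_tT_lca:
  assumes "relaxed_scenario Sc"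
  shows "ultrametric_on (LT Sc) (tT_lca Sc)"
proof -
  have "ultrametric_on (VT Sc) (\<lambda>x y. tauT Sc (lca (VT Sc) (ET Sc) x y))"
    using assms unfolding relaxed_scenario_def by (blast intro: lca_time_ultrametric)
  then show ?thesis
    using ultrametric_on_compose[where f = id and B = "LT Sc"]
    unfolding tT_lca_def[abs_def] leaves_def by auto
qed

lemma relaxed_scenario_ultrametric_tS_lca:
  assumes "relaxed_scenario Sc"
  shows "ultrametric_on (LT Sc) (tS_lca Sc)"
proof -
  have "ultrametric_on (VS Sc) (\<lambda>x y. tauS Sc (lca (VS Sc) (ES Sc) x y))"
    using assms unfolding relaxed_scenario_def by (blast intro: lca_time_ultrametric)
  moreover have "sigma Sc ` LT Sc \<subseteq> VS Sc"
    using assms unfolding relaxed_scenario_def leaves_def by blast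
  ultimately show ?thesis
    unfolding tS_lca_def[abs_def] by (rule ultrametric_on_compose)
qed

theorem lemma19:
  fixes Sc :: "('g, 's) scenario"
  assumes "relaxed_scenario Sc"
    and "induced_P4 (G_eq Sc) (LT Sc) a b c d"
  shows "((G_lt Sc a d \<and> G_gt Sc a c \<and> G_gt Sc b d) \<or>
          (G_gt Sc a d \<and> G_lt Sc a c \<and> G_lt Sc b d)) \<and>
         rainbow_triangle Sc a b d \<and> rainbow_triangle Sc a c d"
proof -
  have leaves: "a \<in> LT Sc" "b \<in> LT Sc" "c \<in> LT Sc" "d \<in> LT Sc"
    and distinct: "distinct [a, b, c, d]"
    and G_eq: "G_eq Sc a b" "G_eq Sc c d"
    and agree: "tT_lca Sc a b = tS_lca Sc a b" "tT_lca Sc b c = tS_lca Sc b c"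
      "tT_lca Sc c d = tS_lca Sc c d"
    and disagree: "tT_lca Sc a c \<noteq> tS_lca Sc a c" "tT_lca Sc b d \<noteq> tS_lca Sc b d"
      "tT_lca Sc a d \<noteq> tS_lca Sc a d"
    using assms(2) unfolding induced_P4_def G_eq_def by auto
  have "(tT_lca Sc a d < tS_lca Sc a d \<and> tT_lca Sc a c > tS_lca Sc a c \<and>
         tT_lca Sc b d > tS_lca Sc b d) \<or>
        (tT_lca Sc a d > tS_lca Sc a d \<and> tT_lca Sc a c < tS_lca Sc a c \<and>
         tT_lca Sc b d < tS_lca Sc b d)"
    using ultrametrics_P4_signs[OF relaxed_scenario_ultrametric_tT_lca[OF assms(1)]
        relaxed_scenario_ultrametric_tS_lca[OF assms(1)] leaves agree disagree] .
  then consider "G_lt Sc a d" "G_gt Sc a c" "G_gt Sc b d" | "G_gt Sc a d" "G_lt Sc a c" "G_lt Sc b d"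
    using leaves distinct unfolding G_lt_def G_gt_def by auto
  then show ?thesis
    using G_eq unfolding rainbow_triangle_def by cases blast+
qed

end
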